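(* Let $m\ge2$ and consider the single-family model. Let $q_m'$ be the probability that an individual of type $m$ is born at some time, but that eventually all individuals in the population have type $0$. If $N\mu^{1-2^{-(m-1)}}\to0$ as $N\to\infty$, then $q_m'\ll1/N$, i.e. $Nq_m'\to0$.
   Context: Single-family model: a population of $N$ individuals with types in $\{0,1,2,\dots\}$, with mutation rate $\mu=\mu(N)>0$. Initially one individual has type $1$ and the other $N-1$ have type $0$. Each individual independently lives for an exponentially distributed time with mean $1$, and is then replaced by a new individual whose parent is chosen uniformly at random from the $N$ individuals (including the one being replaced), inheriting the parent's type. Each individual of type $k\ge1$ experiences mutations at the times of a rate-$\mu$ Poisson process, each changing its type from $k$ to $k+1$; type $0$ individuals never mutate. Limits are as $N\to\infty$. *)

theory Defs
  imports "HOL-Probability.Probability"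
begin

text \<open>The population is a list of N types (individual i has type xs ! i).
The continuous-time chain has total event rate N + mu * k, where k is the number of individuals
of type at least 1: each individual dies at rate 1 (and is replaced by a copy of a uniformly chosen
parent, possibly itself), each individual of type at least 1 mutates at rate mu.
We record the embedded jump chain (including deaths that do not change the configuration);
the event considered depends only on the sequence of visited configurations.\<close>

definition death_step :: "nat \<Rightarrow> nat list \<Rightarrow> nat list pmf" where
  "death_step N xs =
     bind_pmf (pmf_of_set {..<N}) (\<lambda>i.
     bind_pmf (pmf_of_set {..<N}) (\<lambda>j.
     return_pmf (xs[i := xs ! j])))"

definition mut_step :: "nat list \<Rightarrow> nat list pmf" where
  "mut_step xs =
     map_pmf (\<lambda>i. xs[i := Suc (xs ! i)]) (pmf_of_set {i. i < length xs \<and> xs ! i \<ge> 1})"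

definition sf_step :: "nat \<Rightarrow> real \<Rightarrow> nat list \<Rightarrow> nat list pmf" where
  "sf_step N \<mu> xs =
     (let k = card {i. i < length xs \<and> xs ! i \<ge> 1} in
      if k = 0 then death_step N xs
      else bind_pmf (bernoulli_pmf (real N / (real N + \<mu> * real k)))
             (\<lambda>b. if b then death_step N xs else mut_step xs))"

fun sf_path :: "nat \<Rightarrow> real \<Rightarrow> nat \<Rightarrow> nat list \<Rightarrow> nat list list pmf" where
  "sf_path N \<mu> 0 xs = return_pmf [xs]"
| "sf_path N \<mu> (Suc n) xs =
     bind_pmf (sf_step N \<mu> xs) (\<lambda>ys. map_pmf (Cons xs) (sf_path N \<mu> n ys))"

definition sf_init :: "nat \<Rightarrow> nat list" where
  "sf_init N = 1 # replicate (N - 1) 0"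

text \<open>Paths in which some individual of type m has existed and the final configuration is all type 0
(all-type-0 is absorbing, so this is an increasing family of events in the horizon n).\<close>
definition sf_event :: "nat \<Rightarrow> nat list list set" where
  "sf_event m = {ps. (\<exists>xs\<in>set ps. m \<in> set xs) \<and> (\<forall>t\<in>set (last ps). t = 0)}"

definition q_prime :: "nat \<Rightarrow> nat \<Rightarrow> real \<Rightarrow> real" where
  "q_prime m N \<mu> = (SUP n. measure_pmf.prob (sf_path N \<mu> n (sf_init N)) (sf_event m))"

end

theory Submission
  imports Defs
begin

(* Write count_ge t xs for the number of individuals of type at least t.
   On configurations whose types are all below m we build a Lyapunov function
     lyap xs = min 1 (\<Sum>t=1..m-1. A_t (count_ge t xs))     (and 0 once nobody has type 0)
   and show that it dominates the probability of the event "type m is born and then the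
   whole population dies out" for every time horizon.  By induction on the horizon this
   reduces to a one-step inequality: the expected value of the bound after one jump of the
   chain is at most lyap xs.  Successors in which type m appears are controlled by their
   extinction probability, which is at most 1 - count_ge 1 xs / N because the fraction of
   nonzero types is a martingale (resampling is neutral, mutation keeps types nonzero).
   The level potentials: the top level m-1 uses 1 - (1 - sqrt mu)^y; a lower level t uses a
   concave, truncated potential whose negative second difference under resampling pays for
   the mutations feeding level t+1.  The increments c_i of these potentials satisfy
   c_0 = sqrt mu, c_(i+1) = 4 sqrt (mu c_i), hence c_i <= 16 mu^(1 - 2^-(i+1)), and the initial
   configuration has lyap <= A_1 1 <= c_(m-2). *)


lemma integral_bind_pmf':
  fixes f :: "'b \<Rightarrow> real"
  assumes "\<And>x. \<bar>f x\<bar> \<le> B"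
  shows "integral\<^sup>L (bind_pmf M N) f = (\<integral>x. integral\<^sup>L (N x) f \<partial>M)"
  unfolding measure_pmf_bind
  apply (rule integral_bind[where K="count_space UNIV" and B=B and B'=1])
  using assms by (auto simp: space_subprob_algebra measure_pmf.emeasure_space_1
     intro!: prob_space_imp_subprob_space measure_pmf.prob_space_axioms)

lemma measure_bind_pmf':
  "measure (measure_pmf (bind_pmf M N)) X = (\<integral>x. measure (measure_pmf (N x)) X \<partial>M)"
proof -
  have "measure (measure_pmf (bind_pmf M N)) X = integral\<^sup>L (bind_pmf M N) (indicator X)"
    by simp
  also have "\<dots> = (\<integral>x. integral\<^sup>L (N x) (indicator X) \<partial>M)"
    by (rule integral_bind_pmf'[where B=1]) (auto simp: indicator_def)
  finally show ?thesis by simp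
qed

lemma integral_le_1:
  fixes F :: "'a \<Rightarrow> real"
  assumes "\<And>x. \<bar>F x\<bar> \<le> 1"
  shows "integral\<^sup>L (measure_pmf M) F \<le> 1"
proof -
  have "integral\<^sup>L (measure_pmf M) F \<le> integral\<^sup>L (measure_pmf M) (\<lambda>_. 1)"
    by (rule integral_mono, rule measure_pmf.integrable_const_bound[where B=1])
       (use assms in \<open>auto simp: abs_le_iff\<close>)
  then show ?thesis by simp
qed


text \<open>Number of individuals of type at least t; the state of the chain enters the
  potentials only through these counts.\<close>

definition count_ge :: "nat \<Rightarrow> nat list \<Rightarrow> nat" where
  "count_ge t xs = card {i. i < length xs \<and> t \<le> xs ! i}"

lemma count_ge_le: "count_ge t xs \<le> length xs"
proof -
  have "{i. i < length xs \<and> t \<le> xs ! i} \<subseteq> {..<length xs}" by auto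
  then have "card {i. i < length xs \<and> t \<le> xs ! i} \<le> card {..<length xs}"
    by (intro card_mono) auto
  then show ?thesis unfolding count_ge_def by simp
qed

lemma count_ge_antimono: "1 \<le> t \<Longrightarrow> count_ge t xs \<le> count_ge 1 xs"
  unfolding count_ge_def by (intro card_mono) auto

lemma count_ge_update:
  assumes "i < length xs"
  shows "count_ge t (xs[i:=v]) = (if t \<le> xs!i then (if t \<le> v then count_ge t xs else count_ge t xs - 1)
                             else (if t \<le> v then count_ge t xs + 1 else count_ge t xs))"
proof -
  define S where "S = {l. l < length xs \<and> t \<le> xs!l}"
  have fin: "finite S" unfolding S_def by simp
  have eq: "{l. l < length (xs[i:=v]) \<and> t \<le> xs[i:=v]!l} = (S - {i}) \<union> (if t \<le> v then {i} else {})"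
    using assms unfolding S_def by (auto simp: nth_list_update)
  have c: "count_ge t (xs[i:=v]) = card ((S - {i}) \<union> (if t \<le> v then {i} else {}))"
    unfolding count_ge_def eq ..
  have c0: "count_ge t xs = card S" unfolding count_ge_def S_def ..
  show ?thesis
  proof (cases "t \<le> xs!i")
    case True
    then have iS: "i \<in> S" using assms unfolding S_def by simp
    have "card (S - {i}) = card S - 1" using iS fin by (simp add: card_Diff_singleton)
    moreover have "card (S - {i} \<union> {i}) = card S"
      using iS by (metis Un_insert_right insert_Diff sup_bot.right_neutral)
    ultimately show ?thesis unfolding c c0 using True by simp
  next
    case False
    then have iS: "i \<notin> S" using assms unfolding S_def by simp
    then have "card (S - {i} \<union> {i}) = card S + 1" using fin by simp
    then show ?thesis unfolding c c0 using False iS by simp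
  qed
qed

lemma count_ge_mutate:
  assumes "i < length xs"
  shows "count_ge t (xs[i:=Suc (xs!i)]) = count_ge t xs + (if t = Suc (xs!i) then 1 else 0)"
  using assms by (auto simp: count_ge_update)

lemma card_split_lt:
  assumes "length xs = N"
  shows "card {j\<in>{..<N}. t \<le> xs!j} = count_ge t xs" "card {j\<in>{..<N}. \<not> t \<le> xs!j} = N - count_ge t xs"
proof -
  show 1: "card {j\<in>{..<N}. t \<le> xs!j} = count_ge t xs" unfolding count_ge_def using assms
    by (intro arg_cong[where f=card]) auto
  have u: "{j\<in>{..<N}. t \<le> xs!j} \<union> {j\<in>{..<N}. \<not> t \<le> xs!j} = {..<N}" by auto
  have "card {j\<in>{..<N}. t \<le> xs!j} + card {j\<in>{..<N}. \<not> t \<le> xs!j} = card {..<N}"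
    by (subst card_Un_disjoint[symmetric]) (auto simp only: u intro: finite_subset[of _ "{..<N}"])
  then show "card {j\<in>{..<N}. \<not> t \<le> xs!j} = N - count_ge t xs" using 1 by simp
qed

lemma sum_bool_split:
  fixes h :: "bool \<Rightarrow> real"
  assumes "finite A"
  shows "(\<Sum>j\<in>A. h (P j)) = real (card {j\<in>A. P j}) * h True + real (card {j\<in>A. \<not> P j}) * h False"
proof -
  have "(\<Sum>j\<in>A. h (P j)) = (\<Sum>j\<in>A. if P j then h True else h False)"
    by (rule sum.cong) auto
  also have "\<dots> = (\<Sum>j\<in>{j\<in>A. P j}. h True) + (\<Sum>j\<in>{j\<in>A. \<not> P j}. h False)"
    using assms by (simp add: sum.If_cases Int_def)
  finally show ?thesis by simp
qed

lemma resample_count_sum: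
  fixes g :: "nat \<Rightarrow> real"
  assumes "length xs = N"
  shows "(\<Sum>i<N. \<Sum>j<N. g (count_ge t (xs[i := xs!j]))) =
     (real (count_ge t xs)^2 + real (N - count_ge t xs)^2) * g (count_ge t xs)
     + real (count_ge t xs) * real (N - count_ge t xs) * (g (count_ge t xs - 1) + g (count_ge t xs + 1))"
proof -
  define y where "y = count_ge t xs"
  define P where "P = (\<lambda>l. t \<le> xs!l)"
  define h where "h = (\<lambda>a b. g (if a then (if b then y else y - 1) else (if b then y + 1 else y)))"
  have c1: "card {j\<in>{..<N}. P j} = y" "card {j\<in>{..<N}. \<not> P j} = N - y"
    using card_split_lt[OF assms] unfolding P_def y_def by auto
  have "(\<Sum>i<N. \<Sum>j<N. g (count_ge t (xs[i := xs!j]))) = (\<Sum>i<N. \<Sum>j<N. h (P i) (P j))"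
    unfolding h_def P_def y_def using assms by (intro sum.cong refl) (simp add: count_ge_update)
  also have "\<dots> = (\<Sum>i<N. real y * h (P i) True + real (N - y) * h (P i) False)"
    using sum_bool_split[of "{..<N}" "h _" P] c1 by simp
  also have "\<dots> = real y * (real y * h True True + real (N - y) * h True False)
      + real (N - y) * (real y * h False True + real (N - y) * h False False)"
    using sum_bool_split[of "{..<N}" "\<lambda>a. real y * h a True + real (N - y) * h a False" P] c1 by simp
  also have "\<dots> = (real y^2 + real (N - y)^2) * g y + real y * real (N - y) * (g (y - 1) + g (y + 1))"
    unfolding h_def by (simp add: power2_eq_square distrib_left distrib_right)
  finally show ?thesis unfolding y_def .
qed


lemma integral_death:
  fixes f :: "nat list \<Rightarrow> real"
  assumes "N \<ge> 1" "\<And>x. \<bar>f x\<bar> \<le> B"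
  shows "integral\<^sup>L (death_step N xs) f = (\<Sum>i<N. \<Sum>j<N. f (xs[i := xs ! j])) / (real N)^2"
proof -
  have ne: "{..<N} \<noteq> {}" using assms by (simp add: lessThan_empty_iff)
  have "integral\<^sup>L (death_step N xs) f
      = (\<integral>i. (\<integral>j. f (xs[i := xs ! j]) \<partial>pmf_of_set {..<N}) \<partial>pmf_of_set {..<N})"
    unfolding death_step_def using assms ne by (simp add: integral_bind_pmf'[where B=B])
  also have "\<dots> = (\<Sum>i<N. \<Sum>j<N. f (xs[i := xs ! j])) / (real N)^2"
    using assms by (simp add: integral_pmf_of_set power2_eq_square sum_divide_distrib lessThan_empty_iff)
  finally show ?thesis .
qed

lemma integral_mut:
  fixes f :: "nat list \<Rightarrow> real"
  assumes "count_ge 1 xs \<ge> 1"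
  shows "integral\<^sup>L (mut_step xs) f
    = (\<Sum>i\<in>{i. i < length xs \<and> 1 \<le> xs ! i}. f (xs[i := Suc (xs ! i)])) / real (count_ge 1 xs)"
proof -
  have "{i. i < length xs \<and> 1 \<le> xs ! i} \<noteq> {}"
    using assms unfolding count_ge_def by (metis card.empty not_one_le_zero)
  then show ?thesis unfolding mut_step_def by (simp add: integral_pmf_of_set count_ge_def)
qed

lemma integral_step:
  fixes f :: "nat list \<Rightarrow> real"
  assumes "N \<ge> 1" "\<And>x. \<bar>f x\<bar> \<le> B" "\<mu> > 0"
  shows "integral\<^sup>L (sf_step N \<mu> xs) f =
    (if count_ge 1 xs = 0 then (\<Sum>i<N. \<Sum>j<N. f (xs[i := xs ! j])) / (real N)^2
     else (real N / (real N + \<mu> * count_ge 1 xs)) * ((\<Sum>i<N. \<Sum>j<N. f (xs[i := xs ! j])) / (real N)^2)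
        + (1 - real N / (real N + \<mu> * count_ge 1 xs)) *
          ((\<Sum>i\<in>{i. i < length xs \<and> 1 \<le> xs ! i}. f (xs[i := Suc (xs ! i)])) / real (count_ge 1 xs)))"
proof (cases "count_ge 1 xs = 0")
  case True
  then show ?thesis unfolding sf_step_def using integral_death[OF assms(1,2)]
    by (simp add: count_ge_def[symmetric])
next
  case False
  have p: "0 \<le> real N / (real N + \<mu> * count_ge 1 xs)" "real N / (real N + \<mu> * count_ge 1 xs) \<le> 1"
    using assms by (auto simp: divide_le_eq_1)
  show ?thesis unfolding sf_step_def Let_def count_ge_def[symmetric] using False
    apply simp
    apply (subst integral_bind_pmf'[where B=B])
    using assms apply (auto split: if_splits)[1]
    using p integral_death[OF assms(1,2)] integral_mut[of xs f] by (simp add: algebra_simps)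
qed

lemma path_Suc_measure:
  "measure (sf_path N \<mu> (Suc n) xs) E
     = (\<integral>ys. measure (sf_path N \<mu> n ys) (Cons xs -` E) \<partial>sf_step N \<mu> xs)"
  by (simp add: measure_bind_pmf')

lemma path_nonempty: "[] \<notin> set_pmf (sf_path N \<mu> n xs)"
  by (cases n) auto

lemma integral_step_mono:
  fixes F G :: "nat list \<Rightarrow> real"
  assumes N1: "1 \<le> N" and mu: "0 < \<mu>" and len: "length xs = N"
    and FB: "\<And>x. \<bar>F x\<bar> \<le> Ba" and GB: "\<And>x. \<bar>G x\<bar> \<le> Bb"
    and FG: "\<And>ys. length ys = N \<Longrightarrow> F ys \<le> G ys"
  shows "integral\<^sup>L (sf_step N \<mu> xs) F \<le> integral\<^sup>L (sf_step N \<mu> xs) G"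
proof -
  define p where "p = real N / (real N + \<mu> * real (count_ge 1 xs))"
  have p01: "0 \<le> p" "p \<le> 1" unfolding p_def using mu N1 by (auto simp: divide_le_eq_1)
  have D: "(\<Sum>i<N. \<Sum>j<N. F (xs[i := xs ! j])) / (real N)^2 \<le> (\<Sum>i<N. \<Sum>j<N. G (xs[i := xs ! j])) / (real N)^2"
    by (intro divide_right_mono sum_mono FG) (auto simp add: len)
  have M: "(\<Sum>i\<in>{i. i < length xs \<and> 1 \<le> xs ! i}. F (xs[i := Suc (xs ! i)])) / real (count_ge 1 xs)
         \<le> (\<Sum>i\<in>{i. i < length xs \<and> 1 \<le> xs ! i}. G (xs[i := Suc (xs ! i)])) / real (count_ge 1 xs)"
    by (intro divide_right_mono sum_mono FG) (auto simp add: len)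
  have "p * ((\<Sum>i<N. \<Sum>j<N. F (xs[i := xs ! j])) / (real N)^2)
        + (1 - p) * ((\<Sum>i\<in>{i. i < length xs \<and> 1 \<le> xs ! i}. F (xs[i := Suc (xs ! i)])) / real (count_ge 1 xs))
     \<le> p * ((\<Sum>i<N. \<Sum>j<N. G (xs[i := xs ! j])) / (real N)^2)
        + (1 - p) * ((\<Sum>i\<in>{i. i < length xs \<and> 1 \<le> xs ! i}. G (xs[i := Suc (xs ! i)])) / real (count_ge 1 xs))"
    using D M p01 by (intro add_mono mult_left_mono) auto
  then show ?thesis
    unfolding integral_step[OF N1 FB mu] integral_step[OF N1 GB mu] p_def[symmetric]
    using D by simp
qed


text \<open>Harmonic-type sums Hsum N j = \<Sum>k=1..j. 1/(N-k) and their partial sums Fsum, the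
  solution of Fsum(y+1) - Fsum y = Hsum y, whose second difference is 1/(N-y).\<close>

definition Hsum :: "nat \<Rightarrow> nat \<Rightarrow> real" where
  "Hsum N j = (\<Sum>k\<in>{1..j}. 1 / (real N - real k))"

definition Fsum :: "nat \<Rightarrow> nat \<Rightarrow> real" where
  "Fsum N y = (\<Sum>k\<in>{1..<y}. (real y - real k) / (real N - real k))"

lemma Hsum_0[simp]: "Hsum N 0 = 0" by (simp add: Hsum_def)
lemma Fsum_0[simp]: "Fsum N 0 = 0" by (simp add: Fsum_def)

lemma Hsum_Suc: "Hsum N (Suc j) = Hsum N j + 1 / (real N - real (Suc j))"
  unfolding Hsum_def by (simp add: add.commute)

lemma Fsum_Suc: "Fsum N (Suc y) = Fsum N y + Hsum N y"
proof -
  have "Fsum N (Suc y) = (\<Sum>k\<in>{1..y}. (real y - real k) / (real N - real k) + 1 / (real N - real k))"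
    unfolding Fsum_def
    by (intro sum.cong) (auto simp: atLeastLessThanSuc_atLeastAtMost add_divide_distrib[symmetric])
  also have "\<dots> = (\<Sum>k\<in>{1..y}. (real y - real k) / (real N - real k)) + Hsum N y"
    by (simp add: sum.distrib Hsum_def)
  also have "(\<Sum>k\<in>{1..y}. (real y - real k) / (real N - real k)) = Fsum N y"
  proof (cases y)
    case (Suc z)
    then have "{1..y} = insert y {1..<y}" by auto
    then show ?thesis unfolding Fsum_def by simp
  qed (simp add: Fsum_def)
  finally show ?thesis .
qed

lemma Hsum_nonneg: "j < N \<Longrightarrow> 0 \<le> Hsum N j"
  unfolding Hsum_def by (intro sum_nonneg) auto

lemma Fsum_le: "y \<le> N \<Longrightarrow> Fsum N y \<le> real y"
proof -
  assume y: "y \<le> N"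
  have "Fsum N y \<le> (\<Sum>k\<in>{1..<y}. 1)"
    unfolding Fsum_def by (intro sum_mono) (use y in auto)
  also have "\<dots> \<le> real y" by simp
  finally show ?thesis .
qed

text \<open>Below N/2 the terms 1/(N-k) are at most 2/N, so Fsum grows at most quadratically.\<close>
lemma Fsum_le_square:
  assumes "0 < N" "2 * y \<le> N + 2"
  shows "real N * Fsum N y \<le> (real y)^2"
  using assms(2)
proof (induction y)
  case (Suc y)
  have "Hsum N y \<le> (\<Sum>k\<in>{1..y}. 2 / real N)"
    unfolding Hsum_def
  proof (intro sum_mono)
    fix k assume "k \<in> {1..y}"
    then have "2 * real k \<le> real N" using Suc.prems by auto
    then show "1 / (real N - real k) \<le> 2 / real N" using assms(1) by (simp add: field_simps)
  qed
  then have "real N * Hsum N y \<le> 2 * real y"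
    using assms(1) by (simp add: field_simps)
  moreover have "real N * Fsum N y \<le> (real y)^2" using Suc by simp
  ultimately show ?case
    unfolding Fsum_Suc by (simp add: algebra_simps power2_eq_square)
qed simp


text \<open>Potential of an intermediate level with parameter d: raw_pot is 4 sqrt d y minus a
  convex correction making the second difference -dN/(N-y); it is cut off at the point
  cutoff N d where it first reaches 1 (or at N if it never does).\<close>

definition raw_pot :: "nat \<Rightarrow> real \<Rightarrow> nat \<Rightarrow> real" where
  "raw_pot N d y = 4 * sqrt d * real y - d * real N * Fsum N y"

definition cutoff :: "nat \<Rightarrow> real \<Rightarrow> nat" where
  "cutoff N d = (if d * (real N)^2 \<le> 4 then N else nat \<lceil>1 / sqrt d\<rceil>)"

definition mid_pot :: "nat \<Rightarrow> real \<Rightarrow> nat \<Rightarrow> real" where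
  "mid_pot N d y = min 1 (raw_pot N d (min y (cutoff N d)))"

lemma raw_pot_0[simp]: "raw_pot N d 0 = 0" by (simp add: raw_pot_def)

lemma raw_pot_Suc: "raw_pot N d (Suc y) = raw_pot N d y + 4 * sqrt d - d * real N * Hsum N y"
  unfolding raw_pot_def Fsum_Suc by (simp add: algebra_simps)

lemma raw_pot_delta2:
  assumes "1 \<le> y"
  shows "raw_pot N d (y+1) + raw_pot N d (y-1) - 2 * raw_pot N d y = - d * real N / (real N - real y)"
proof -
  obtain z where z: "y = Suc z" using assms by (cases y) auto
  show ?thesis unfolding z using raw_pot_Suc[of N d "Suc z"] raw_pot_Suc[of N d z] Hsum_Suc[of N z]
    by (simp add: algebra_simps)
qed

lemma raw_pot_ge_quadratic:
  assumes "0 < N" "2 * y \<le> N + 2" "0 \<le> d"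
  shows "sqrt d * real y * (4 - sqrt d * real y) \<le> raw_pot N d y"
proof -
  have "d * (real N * Fsum N y) \<le> d * (real y)^2"
    using Fsum_le_square[OF assms(1,2)] assms(3) by (rule mult_left_mono)
  then show ?thesis
    using assms(3) unfolding raw_pot_def by (simp add: algebra_simps power2_eq_square)
qed

lemma sqrt_le_half:
  assumes "d \<le> 1/4" shows "sqrt d \<le> 1/2"
proof -
  have "sqrt d \<le> sqrt ((1/2)^2)" using assms by (intro real_sqrt_le_mono) (simp add: power2_eq_square)
  then show ?thesis by simp
qed

lemma raw_pot_nonneg_small:
  assumes "0 < d" "d * (real N)^2 \<le> 4" "y \<le> N"
  shows "0 \<le> raw_pot N d y"
proof -
  have "(sqrt d * real N)^2 \<le> 2^2" using assms by (simp add: power_mult_distrib)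
  then have "sqrt d * real N \<le> 2" by (rule power2_le_imp_le) simp
  then have "sqrt d * (sqrt d * real N) \<le> sqrt d * 2" using assms by (intro mult_left_mono) auto
  then have dN: "d * real N \<le> 2 * sqrt d" using assms by (simp add: mult.assoc[symmetric])
  have "d * real N * Fsum N y \<le> d * real N * real y"
    using Fsum_le[OF assms(3)] assms by (intro mult_left_mono) auto
  also have "\<dots> \<le> 2 * sqrt d * real y" using dN by (intro mult_right_mono) auto
  finally have "d * real N * Fsum N y \<le> 2 * sqrt d * real y" .
  moreover have "0 \<le> sqrt d * real y" using assms by simp
  ultimately show ?thesis unfolding raw_pot_def by linarith
qed

text \<open>If d N^2 > 4 the cutoff is \<lceil>1/sqrt d\<rceil> < N/2 + 1; there sqrt d y \<in> [1, 3/2], so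
  the raw potential is nonnegative before the cutoff and at least 1 at it.\<close>
lemma raw_pot_large:
  assumes N: "N \<ge> 2" and d: "0 < d" "d \<le> 1/4" and large: "\<not> d * (real N)^2 \<le> 4"
  shows "cutoff N d \<le> N" "1 \<le> cutoff N d" "\<And>y. y \<le> cutoff N d \<Longrightarrow> 0 \<le> raw_pot N d y"
    and "1 \<le> raw_pot N d (cutoff N d)"
proof -
  define Y where "Y = cutoff N d"
  have sd: "0 < sqrt d" "sqrt d \<le> 1/2" using d sqrt_le_half by auto
  have Y: "Y = nat \<lceil>1 / sqrt d\<rceil>" using large by (simp add: Y_def cutoff_def)
  have isd: "2 \<le> 1 / sqrt d" using sd by (simp add: field_simps)
  have Yr: "1 / sqrt d \<le> real Y" "real Y < 1 / sqrt d + 1"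
    unfolding Y using isd by linarith+
  have "2^2 < (sqrt d * real N)^2" using large d by (simp add: power_mult_distrib)
  then have "2 < sqrt d * real N" by (rule power_less_imp_less_base) (use sd in simp)
  then have half: "1 / sqrt d < real N / 2" using sd by (simp add: field_simps)
  have RN: "2 \<le> real N" using N by simp
  have "real Y < real N" using Yr half RN by linarith
  then show "cutoff N d \<le> N" unfolding Y_def by simp
  have "1 \<le> real Y" using Yr isd by linarith
  then show "1 \<le> cutoff N d" unfolding Y_def by simp
  have x1: "1 \<le> sqrt d * real Y" using Yr sd by (simp add: field_simps)
  have xb: "0 \<le> sqrt d * real y" "sqrt d * real y \<le> 3/2" if "y \<le> Y" for y
  proof -
    show "0 \<le> sqrt d * real y" using sd by simp
    have "sqrt d * real y \<le> sqrt d * real Y" using that sd by (intro mult_left_mono) auto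
    also have "\<dots> < sqrt d * (1 / sqrt d + 1)" using Yr sd by (intro mult_strict_left_mono) auto
    also have "\<dots> = 1 + sqrt d" using sd by (simp add: field_simps)
    finally show "sqrt d * real y \<le> 3/2" using sd by linarith
  qed
  have quad: "sqrt d * real y * (4 - sqrt d * real y) \<le> raw_pot N d y" if "y \<le> Y" for y
  proof (rule raw_pot_ge_quadratic)
    have "real y \<le> real Y" using that by simp
    then have "real (2 * y) < real (N + 2)" using Yr half by simp
    then show "2 * y \<le> N + 2" by linarith
  qed (use N d in auto)
  show "0 \<le> raw_pot N d y" if "y \<le> cutoff N d" for y
  proof -
    have x: "0 \<le> sqrt d * real y" "sqrt d * real y \<le> 3/2" using xb that unfolding Y_def by auto
    have "0 \<le> sqrt d * real y * (4 - sqrt d * real y)"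
      using x by (intro mult_nonneg_nonneg[of "sqrt d * real y"]) auto
    then show ?thesis using quad[of y] that unfolding Y_def by linarith
  qed
  have xY: "sqrt d * real Y \<le> 3/2" using xb[of Y] by simp
  have "1 * 1 \<le> sqrt d * real Y * (4 - sqrt d * real Y)"
    using x1 xY by (intro mult_mono) auto
  then have "1 \<le> raw_pot N d Y" using quad[of Y] by simp
  then show "1 \<le> raw_pot N d (cutoff N d)" by (simp add: Y_def)
qed

lemma cutoff_props:
  assumes "N \<ge> 2" "0 < d" "d \<le> 1/4"
  shows "cutoff N d \<le> N" "1 \<le> cutoff N d"
    and "\<And>y. y \<le> cutoff N d \<Longrightarrow> 0 \<le> raw_pot N d y"
    and "cutoff N d < N \<Longrightarrow> 1 \<le> raw_pot N d (cutoff N d)"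
proof -
  show "cutoff N d \<le> N" "1 \<le> cutoff N d"
    using raw_pot_large(1,2)[OF assms] assms(1) by (cases "d * (real N)^2 \<le> 4", simp_all add: cutoff_def)+
  show "0 \<le> raw_pot N d y" if "y \<le> cutoff N d" for y
  proof (cases "d * (real N)^2 \<le> 4")
    case True
    then show ?thesis using raw_pot_nonneg_small[OF assms(2) True] that by (simp add: cutoff_def)
  qed (use raw_pot_large(3)[OF assms] that in auto)
  show "1 \<le> raw_pot N d (cutoff N d)" if "cutoff N d < N"
    using raw_pot_large(4)[OF assms] that by (cases "d * (real N)^2 \<le> 4", simp_all add: cutoff_def)
qed

lemma mid_pot_0[simp]: "mid_pot N d 0 = 0" by (simp add: mid_pot_def)

lemma mid_pot_nonneg:
  assumes "N \<ge> 2" "0 < d" "d \<le> 1/4"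
  shows "0 \<le> mid_pot N d y"
  using cutoff_props(3)[OF assms, of "min y (cutoff N d)"] unfolding mid_pot_def by simp

lemma mid_pot_inc:
  assumes "N \<ge> 2" "0 < d" "d \<le> 1/4"
  shows "mid_pot N d (Suc y) \<le> mid_pot N d y + 4 * sqrt d"
proof (cases "y < cutoff N d")
  case True
  then have m: "min (Suc y) (cutoff N d) = Suc y" "min y (cutoff N d) = y" by auto
  have "0 \<le> Hsum N y" using cutoff_props(1)[OF assms] True by (intro Hsum_nonneg) auto
  then have "raw_pot N d (Suc y) \<le> raw_pot N d y + 4 * sqrt d"
    unfolding raw_pot_Suc using assms by simp
  moreover have "min 1 a \<le> min 1 b + c" if "a \<le> b + c" "0 \<le> c" for a b c :: real
    using that unfolding min_def by (auto split: if_splits)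
  ultimately show ?thesis unfolding mid_pot_def m using assms by simp
next
  case False
  then have "min (Suc y) (cutoff N d) = min y (cutoff N d)" by auto
  then show ?thesis unfolding mid_pot_def using assms by simp
qed

lemma mid_pot_delta2:
  assumes "N \<ge> 2" "0 < d" "d \<le> 1/4" "1 \<le> y" "y < N" "mid_pot N d y < 1"
  shows "mid_pot N d (y+1) + mid_pot N d (y-1) - 2 * mid_pot N d y \<le> - d * real N / (real N - real y)"
proof -
  have yY: "y < cutoff N d"
  proof (rule ccontr)
    assume "\<not> y < cutoff N d"
    then have "min y (cutoff N d) = cutoff N d" "cutoff N d < N" using assms by auto
    then have "mid_pot N d y = 1" unfolding mid_pot_def using cutoff_props(4)[OF assms(1-3)] by simp
    then show False using assms by simp
  qed
  have e0: "mid_pot N d y = raw_pot N d y"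
    using yY assms(6) unfolding mid_pot_def by (simp add: min_def split: if_splits)
  have e1: "mid_pot N d (y+1) \<le> raw_pot N d (y+1)" using yY unfolding mid_pot_def by (simp add: min_def)
  have "min (y-1) (cutoff N d) = y - 1" using yY by simp
  then have e2: "mid_pot N d (y-1) \<le> raw_pot N d (y-1)" unfolding mid_pot_def by simp
  show ?thesis using e0 e1 e2 raw_pot_delta2[OF assms(4), of N d] by linarith
qed

text \<open>Resampling drift of the intermediate potential with d = mu c' compensates mutation
  at rate mu with increments c'.\<close>
lemma mid_pot_drift:
  assumes "N \<ge> 2" "0 < d" "d \<le> 1/4" "y < N" "mid_pot N d y < 1" "d = \<mu> * c'" "\<mu> > 0"
  shows "real y * (real N - real y) * (mid_pot N d (y+1) + mid_pot N d (y-1) - 2 * mid_pot N d y)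
         + real N * \<mu> * real y * c' \<le> 0"
proof (cases "y = 0")
  case False
  have D: "mid_pot N d (y+1) + mid_pot N d (y-1) - 2 * mid_pot N d y \<le> - d * real N / (real N - real y)"
    using mid_pot_delta2[OF assms(1-3) _ assms(4,5)] False by simp
  have pos: "0 \<le> real y * (real N - real y)" using assms by simp
  have "real y * (real N - real y) * (mid_pot N d (y+1) + mid_pot N d (y-1) - 2 * mid_pot N d y)
      \<le> real y * (real N - real y) * (- d * real N / (real N - real y))"
    by (rule mult_left_mono[OF D pos])
  also have "\<dots> = - real N * \<mu> * real y * c'" using assms by (simp add: field_simps)
  finally show ?thesis by simp
qed simp


text \<open>Its resampling drift
  together with the mutation drift into type m (bounded through the extinction
  probability 1 - y/N) is nonpositive.\<close>

definition top_pot :: "real \<Rightarrow> nat \<Rightarrow> real" where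
  "top_pot s y = 1 - (1 - s)^y"

lemma top_pot_0[simp]: "top_pot s 0 = 0" by (simp add: top_pot_def)

lemma top_pot_nonneg: "0 \<le> s \<Longrightarrow> s \<le> 1 \<Longrightarrow> 0 \<le> top_pot s y"
  unfolding top_pot_def by (simp add: power_le_one)

lemma top_pot_inc: "0 \<le> s \<Longrightarrow> s \<le> 1 \<Longrightarrow> top_pot s (Suc y) \<le> top_pot s y + s"
proof -
  assume s: "0 \<le> s" "s \<le> 1"
  have "(1 - s)^y * s \<le> 1 * s" using s by (intro mult_right_mono) (auto simp: power_le_one)
  then show ?thesis unfolding top_pot_def by (simp add: algebra_simps)
qed

lemma top_pot_drift:
  assumes "0 < \<mu>" "\<mu> \<le> 1" "y \<le> N"
  shows "real y * (real N - real y) * (top_pot (sqrt \<mu>) (y+1) + top_pot (sqrt \<mu>) (y-1) - 2 * top_pot (sqrt \<mu>) y)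
         + real N * \<mu> * real y * (1 - real y / real N - top_pot (sqrt \<mu>) y) \<le> 0"
proof (cases "y = 0")
  case False
  define s where "s = sqrt \<mu>"
  have s: "0 \<le> s" "s \<le> 1" "s * s = \<mu>" using assms unfolding s_def by auto
  define q where "q = 1 - s"
  have q: "0 \<le> q" "q \<le> 1" using s unfolding q_def by auto
  obtain z where z: "y = Suc z" using False by (cases y) auto
  define a where "a = q ^ z"
  have a: "0 \<le> a" "a \<le> 1" using q unfolding a_def by (auto simp: power_le_one)
  have N: "real N > 0" using assms False by auto
  have D: "top_pot s (y+1) + top_pot s (y-1) - 2 * top_pot s y = - a * \<mu>"
  proof -
    have "top_pot s (y+1) + top_pot s (y-1) - 2 * top_pot s y = q^z * (2 * q - 1 - q * q)"
      unfolding top_pot_def z q_def by (simp add: algebra_simps)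
    also have "2 * q - 1 - q * q = - \<mu>" unfolding q_def s(3)[symmetric] by (simp add: algebra_simps)
    finally show ?thesis unfolding a_def by simp
  qed
  have By: "top_pot s y = 1 - q * a" unfolding top_pot_def z a_def q_def by simp
  have "real y * (real N - real y) * (- a * \<mu>) + real N * \<mu> * real y * (1 - real y / real N - (1 - q * a))
      = \<mu> * real y * (- (real N - real y) * a - real y + real N * q * a)"
    using N by (simp add: field_simps)
  also have "\<dots> \<le> \<mu> * real y * (- (real N - real y) * a - real y + real N * a)"
  proof -
    have "q * a \<le> 1 * a" using q a by (intro mult_right_mono) auto
    then have "real N * q * a \<le> real N * a" using N by (simp add: mult.assoc)
    then show ?thesis using assms by (intro mult_left_mono) auto
  qed
  also have "\<dots> = \<mu> * real y * (real y * (a - 1))" by (simp add: algebra_simps)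
  also have "\<dots> \<le> 0" using a assms by (simp add: mult_nonneg_nonpos)
  finally show ?thesis unfolding s_def[symmetric] D unfolding By .
qed simp


text \<open>Increments of the level potentials: c_0 = sqrt mu for the top level and
  c_(i+1) = 4 sqrt (mu c_i) one level further down, so c_i \<le> 16 mu^(1 - 2^-(i+1)).\<close>

fun rate_const :: "real \<Rightarrow> nat \<Rightarrow> real" where
  "rate_const \<mu> 0 = sqrt \<mu>"
| "rate_const \<mu> (Suc i) = 4 * sqrt (\<mu> * rate_const \<mu> i)"

lemma rate_const_bound:
  assumes "0 < \<mu>" "\<mu> \<le> 1"
  shows "0 < rate_const \<mu> i \<and> rate_const \<mu> i \<le> 16 * \<mu> powr (1 - 1 / 2 ^ (i+1))"
proof (induction i)
  case 0
  then show ?case using assms powr_half_sqrt[of \<mu>] by (simp add: field_simps)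
next
  case (Suc i)
  define e :: real where "e = 1 - 1 / 2 ^ (i+1)"
  have pos: "0 < rate_const \<mu> (Suc i)" using Suc assms by simp
  have "rate_const \<mu> (Suc i) \<le> 4 * sqrt (\<mu> * (16 * \<mu> powr e))"
    using Suc assms unfolding e_def by (simp add: mult_left_mono)
  also have "\<mu> * (16 * \<mu> powr e) = 16 * \<mu> powr (1 + e)"
    using assms by (simp add: powr_add)
  also have "4 * sqrt (16 * \<mu> powr (1 + e)) = 16 * \<mu> powr ((1 + e) / 2)"
    using assms by (simp add: real_sqrt_mult powr_half_sqrt_powr)
  also have "(1 + e) / 2 = 1 - 1 / 2 ^ (Suc i + 1)"
    unfolding e_def by (simp add: field_simps)
  finally show ?case using pos by simp
qed

lemma rate_const_le16:
  assumes "0 < \<mu>" "\<mu> \<le> 1"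
  shows "rate_const \<mu> i \<le> 16"
proof -
  have "(1::real) \<le> 2^(i+1)" by (rule one_le_power) simp
  then have "0 \<le> 1 - 1 / (2::real) ^ (i+1)" by (simp add: field_simps)
  then have "\<mu> powr (1 - 1 / 2 ^ (i+1)) \<le> 1"
    using assms by (intro powr_le1) auto
  then show ?thesis using rate_const_bound[OF assms, of i] by linarith
qed

text \<open>The regime in which the construction works: N \<ge> 2 and mu \<le> 1/64, which makes the
  parameters d = mu c_i of the intermediate potentials at most 1/4.\<close>

definition admissible :: "nat \<Rightarrow> real \<Rightarrow> bool" where
  "admissible N \<mu> \<longleftrightarrow> 2 \<le> N \<and> 0 < \<mu> \<and> \<mu> \<le> 1/64"

lemma admissible_mid:
  assumes "admissible N \<mu>"
  shows "2 \<le> N" "0 < \<mu> * rate_const \<mu> i" "\<mu> * rate_const \<mu> i \<le> 1/4"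
proof -
  have m: "0 < \<mu>" "\<mu> \<le> 1" "\<mu> \<le> 1/64" using assms by (auto simp: admissible_def)
  show "2 \<le> N" using assms by (simp add: admissible_def)
  show "0 < \<mu> * rate_const \<mu> i" using rate_const_bound[OF m(1,2)] m by simp
  have "\<mu> * rate_const \<mu> i \<le> \<mu> * 16" using rate_const_le16[OF m(1,2)] m by (intro mult_left_mono) auto
  then show "\<mu> * rate_const \<mu> i \<le> 1/4" using m by linarith
qed


definition level_pot :: "nat \<Rightarrow> nat \<Rightarrow> real \<Rightarrow> nat \<Rightarrow> nat \<Rightarrow> real" where
  "level_pot m N \<mu> t y =
     (if t = m - 1 then top_pot (sqrt \<mu>) y else mid_pot N (\<mu> * rate_const \<mu> (m - 2 - t)) y)"

definition level_const :: "nat \<Rightarrow> real \<Rightarrow> nat \<Rightarrow> real" where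
  "level_const m \<mu> t = rate_const \<mu> (m - 1 - t)"

lemma level_const_pos: "0 < \<mu> \<Longrightarrow> \<mu> \<le> 1 \<Longrightarrow> 0 < level_const m \<mu> t"
  unfolding level_const_def using rate_const_bound by blast

lemma level_pot_0[simp]: "level_pot m N \<mu> t 0 = 0" by (simp add: level_pot_def)

lemma level_pot_nonneg: "admissible N \<mu> \<Longrightarrow> 0 \<le> level_pot m N \<mu> t y"
  unfolding level_pot_def using mid_pot_nonneg[OF admissible_mid]
  by (auto intro!: top_pot_nonneg simp: admissible_def)

lemma level_pot_inc:
  assumes "admissible N \<mu>" "1 \<le> t" "t \<le> m - 1"
  shows "level_pot m N \<mu> t (Suc y) \<le> level_pot m N \<mu> t y + level_const m \<mu> t"
proof (cases "t = m - 1")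
  case True
  then show ?thesis unfolding level_pot_def level_const_def
    using top_pot_inc[of "sqrt \<mu>" y] assms by (auto simp: admissible_def)
next
  case False
  then have e: "m - 1 - t = Suc (m - 2 - t)" using assms by auto
  show ?thesis unfolding level_pot_def level_const_def e
    using False mid_pot_inc[OF admissible_mid[OF assms(1)]] by simp
qed

lemma level_pot_drift_low:
  assumes "admissible N \<mu>" "t < m - 1" "y < N" "level_pot m N \<mu> t y < 1"
  shows "real y * (real N - real y) * (level_pot m N \<mu> t (y+1) + level_pot m N \<mu> t (y-1) - 2 * level_pot m N \<mu> t y)
         + real N * \<mu> * real y * level_const m \<mu> (t+1) \<le> 0"
proof -
  have e: "m - 1 - (t+1) = m - 2 - t" by simp
  show ?thesis using assms(2,4) unfolding level_pot_def level_const_def e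
    using mid_pot_drift[OF admissible_mid[OF assms(1)] assms(3) _ refl, of "m - 2 - t"] assms(1)
    by (auto simp: admissible_def)
qed

lemma level_pot_drift_top:
  assumes "admissible N \<mu>" "y \<le> N"
  shows "real y * (real N - real y) * (level_pot m N \<mu> (m-1) (y+1) + level_pot m N \<mu> (m-1) (y-1)
           - 2 * level_pot m N \<mu> (m-1) y)
         + real N * \<mu> * real y * (1 - real y / real N - level_pot m N \<mu> (m-1) y) \<le> 0"
  unfolding level_pot_def using assms top_pot_drift[of \<mu> y N] by (auto simp: admissible_def)


text \<open>Extinction: the fraction of individuals of nonzero type is a martingale (resampling is
  neutral and mutation keeps nonzero types nonzero), so the probability that the
  population is all type 0 at any fixed horizon is at most 1 - count_ge 1 xs / N.\<close>

definition extinct :: "nat list list set" where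
  "extinct = {ps. \<forall>t\<in>set (last ps). t = 0}"

lemma event_sub_extinct: "sf_event m \<subseteq> extinct"
  unfolding sf_event_def extinct_def by auto

lemma resample_count_total:
  assumes "length xs = N"
  shows "(\<Sum>i<N. \<Sum>j<N. real (count_ge 1 (xs[i := xs!j]))) = (real N)^2 * real (count_ge 1 xs)"
proof -
  define y where "y = count_ge 1 xs"
  have yN: "y \<le> N" unfolding y_def using count_ge_le[of 1 xs] assms by simp
  have "(\<Sum>i<N. \<Sum>j<N. real (count_ge 1 (xs[i := xs!j]))) =
     (real y^2 + real (N - y)^2) * real y + real y * real (N - y) * (real (y - 1) + real (y + 1))"
    unfolding y_def by (rule resample_count_sum[OF assms])
  also have "\<dots> = (real N)^2 * real y"
  proof (cases "y = 0")
    case False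
    then have "real (y - 1) = real y - 1" by simp
    moreover have "real (N - y) = real N - real y" using yN by simp
    ultimately show ?thesis by (simp add: power2_eq_square algebra_simps)
  qed simp
  finally show ?thesis unfolding y_def .
qed

definition extinct_est :: "nat \<Rightarrow> nat list \<Rightarrow> real" where
  "extinct_est N ys = max 0 (1 - real (count_ge 1 ys) / real N)"

lemma extinct_est_bounded: "\<bar>extinct_est N ys\<bar> \<le> 1"
  unfolding extinct_est_def by (auto simp: abs_le_iff)

lemma extinct_est_eq:
  assumes "1 \<le> N" "length ys = N"
  shows "extinct_est N ys = 1 - real (count_ge 1 ys) / real N"
proof -
  have "real (count_ge 1 ys) \<le> real N" using count_ge_le[of 1 ys] assms by simp
  then show ?thesis unfolding extinct_est_def using assms by (simp add: divide_le_eq_1)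
qed

lemma extinct_est_step:
  assumes N1: "1 \<le> N" and mu: "0 < \<mu>" and len: "length xs = N"
  shows "integral\<^sup>L (sf_step N \<mu> xs) (extinct_est N) \<le> extinct_est N xs"
proof -
  let ?G = "extinct_est N"
  have Npos: "real N > 0" using N1 by simp
  have D: "(\<Sum>i<N. \<Sum>j<N. ?G (xs[i := xs ! j])) / (real N)^2 = ?G xs"
  proof -
    have "(\<Sum>i<N. \<Sum>j<N. ?G (xs[i := xs ! j]))
        = (\<Sum>i<N. \<Sum>j<N. 1 - real (count_ge 1 (xs[i := xs!j])) / real N)"
      using len N1 by (intro sum.cong refl) (simp add: extinct_est_eq)
    also have "\<dots> = (real N)^2 - (\<Sum>i<N. \<Sum>j<N. real (count_ge 1 (xs[i := xs!j]))) / real N"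
      by (simp add: sum_subtractf sum_divide_distrib power2_eq_square)
    also have "\<dots> = (real N)^2 - (real N)^2 * real (count_ge 1 xs) / real N"
      unfolding resample_count_total[OF len] ..
    finally show ?thesis
      unfolding extinct_est_eq[OF N1 len] using Npos by (simp add: field_simps power2_eq_square)
  qed
  have M: "(\<Sum>i\<in>{i. i < length xs \<and> 1 \<le> xs ! i}. ?G (xs[i := Suc (xs ! i)])) / real (count_ge 1 xs) = ?G xs"
    if k: "count_ge 1 xs \<noteq> 0"
  proof -
    have "(\<Sum>i\<in>{i. i < length xs \<and> 1 \<le> xs ! i}. ?G (xs[i := Suc (xs ! i)]))
        = (\<Sum>i\<in>{i. i < length xs \<and> 1 \<le> xs ! i}. ?G xs)"
    proof (intro sum.cong refl)
      fix i assume "i \<in> {i. i < length xs \<and> 1 \<le> xs ! i}"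
      then have "count_ge 1 (xs[i := Suc (xs ! i)]) = count_ge 1 xs"
        using count_ge_mutate[of i xs 1] by auto
      then show "?G (xs[i := Suc (xs ! i)]) = ?G xs" unfolding extinct_est_def by simp
    qed
    also have "\<dots> = real (count_ge 1 xs) * ?G xs" unfolding count_ge_def by simp
    finally show ?thesis using k by simp
  qed
  show ?thesis unfolding integral_step[OF N1 extinct_est_bounded mu] using D M by (simp add: algebra_simps)
qed

lemma extinct_Cons_measure:
  "measure (sf_path N \<mu> n ys) (Cons xs -` extinct) = measure (sf_path N \<mu> n ys) extinct"
proof -
  have "Cons xs -` extinct \<inter> set_pmf (sf_path N \<mu> n ys) = extinct \<inter> set_pmf (sf_path N \<mu> n ys)"
    using path_nonempty[of N \<mu> n ys] unfolding extinct_def by auto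
  then show ?thesis by (metis measure_Int_set_pmf)
qed

lemma extinct_prob_bound:
  assumes N1: "1 \<le> N" and mu: "0 < \<mu>"
  shows "length ys = N \<Longrightarrow> measure (sf_path N \<mu> n ys) extinct \<le> extinct_est N ys"
proof (induction n arbitrary: ys)
  case 0
  show ?case
  proof (cases "[ys] \<in> extinct")
    case True
    then have "\<forall>t\<in>set ys. t = 0" unfolding extinct_def by simp
    then have "{i. i < length ys \<and> 1 \<le> ys ! i} = {}" using nth_mem by fastforce
    then have "count_ge 1 ys = 0" unfolding count_ge_def by simp
    then show ?thesis by (simp add: extinct_est_def)
  qed (simp add: extinct_est_def)
next
  case (Suc n)
  have "measure (sf_path N \<mu> (Suc n) ys) extinct
      = integral\<^sup>L (sf_step N \<mu> ys) (\<lambda>zs. measure (sf_path N \<mu> n zs) extinct)"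
    unfolding path_Suc_measure extinct_Cons_measure ..
  also have "\<dots> \<le> integral\<^sup>L (sf_step N \<mu> ys) (extinct_est N)"
    by (rule integral_step_mono[where Ba=1, OF N1 mu Suc.prems _ extinct_est_bounded Suc.IH]) simp
  also have "\<dots> \<le> extinct_est N ys" by (rule extinct_est_step[OF N1 mu Suc.prems])
  finally show ?case .
qed


text \<open>Sum of level potentials and the Lyapunov function.  It vanishes once every individual
  has nonzero type, since then extinction is impossible.\<close>

definition pot_sum :: "nat \<Rightarrow> nat \<Rightarrow> real \<Rightarrow> nat list \<Rightarrow> real" where
  "pot_sum m N \<mu> xs = (\<Sum>t\<in>{1..<m}. level_pot m N \<mu> t (count_ge t xs))"

definition lyap :: "nat \<Rightarrow> nat \<Rightarrow> real \<Rightarrow> nat list \<Rightarrow> real" where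
  "lyap m N \<mu> xs = (if count_ge 1 xs = N then 0 else min 1 (pot_sum m N \<mu> xs))"

lemma pot_sum_nonneg: "admissible N \<mu> \<Longrightarrow> 0 \<le> pot_sum m N \<mu> xs"
  unfolding pot_sum_def by (intro sum_nonneg level_pot_nonneg)

lemma lyap_nonneg: "admissible N \<mu> \<Longrightarrow> 0 \<le> lyap m N \<mu> xs"
  unfolding lyap_def using pot_sum_nonneg by auto

lemma lyap_le_pot_sum: "admissible N \<mu> \<Longrightarrow> lyap m N \<mu> xs \<le> pot_sum m N \<mu> xs"
  unfolding lyap_def using pot_sum_nonneg by auto

definition level_drift :: "nat \<Rightarrow> nat \<Rightarrow> real \<Rightarrow> nat list \<Rightarrow> nat \<Rightarrow> real" where
  "level_drift m N \<mu> xs t = real (count_ge t xs) * (real N - real (count_ge t xs)) *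
     (level_pot m N \<mu> t (count_ge t xs + 1) + level_pot m N \<mu> t (count_ge t xs - 1)
      - 2 * level_pot m N \<mu> t (count_ge t xs))"

definition mut_cost :: "nat \<Rightarrow> real \<Rightarrow> nat list \<Rightarrow> real" where
  "mut_cost m \<mu> xs = (\<Sum>t\<in>{1..<m-1}. real (count_ge t xs) * level_const m \<mu> (t+1))"

lemma resample_pot_sum:
  assumes "length xs = N"
  shows "(\<Sum>i<N. \<Sum>j<N. pot_sum m N \<mu> (xs[i := xs!j]))
    = (real N)^2 * pot_sum m N \<mu> xs + (\<Sum>t\<in>{1..<m}. level_drift m N \<mu> xs t)"
proof -
  have "(\<Sum>i<N. \<Sum>j<N. pot_sum m N \<mu> (xs[i := xs!j]))
      = (\<Sum>t\<in>{1..<m}. \<Sum>i<N. \<Sum>j<N. level_pot m N \<mu> t (count_ge t (xs[i := xs!j])))"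
    unfolding pot_sum_def by (subst sum.swap, subst (2) sum.swap) (rule refl)
  also have "\<dots> = (\<Sum>t\<in>{1..<m}. (real N)^2 * level_pot m N \<mu> t (count_ge t xs) + level_drift m N \<mu> xs t)"
  proof (intro sum.cong refl)
    fix t
    have "count_ge t xs \<le> N" using count_ge_le[of t xs] assms by simp
    then have r: "real (N - count_ge t xs) = real N - real (count_ge t xs)" by simp
    show "(\<Sum>i<N. \<Sum>j<N. level_pot m N \<mu> t (count_ge t (xs[i := xs!j])))
        = (real N)^2 * level_pot m N \<mu> t (count_ge t xs) + level_drift m N \<mu> xs t"
      unfolding resample_count_sum[OF assms] r level_drift_def by (simp add: power2_eq_square algebra_simps)
  qed
  also have "\<dots> = (real N)^2 * pot_sum m N \<mu> xs + (\<Sum>t\<in>{1..<m}. level_drift m N \<mu> xs t)"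
    unfolding pot_sum_def by (simp add: sum.distrib sum_distrib_left)
  finally show ?thesis .
qed

lemma level_drift_bound:
  assumes adm: "admissible N \<mu>" and m: "2 \<le> m" and len: "length xs = N"
    and notfull: "count_ge 1 xs < N" and below: "pot_sum m N \<mu> xs < 1"
  defines "yp \<equiv> count_ge (m-1) xs"
  shows "(\<Sum>t\<in>{1..<m}. level_drift m N \<mu> xs t) \<le> - real N * \<mu> * mut_cost m \<mu> xs
           - real N * \<mu> * real yp * (1 - real yp / real N - level_pot m N \<mu> (m-1) yp)"
proof -
  have split: "{1..<m} = {1..<m-1} \<union> {m-1}" using m by auto
  have "(\<Sum>t\<in>{1..<m-1}. level_drift m N \<mu> xs t)
      \<le> (\<Sum>t\<in>{1..<m-1}. - (real N * \<mu> * real (count_ge t xs) * level_const m \<mu> (t+1)))"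
  proof (intro sum_mono)
    fix t assume t: "t \<in> {1..<m-1}"
    have "level_pot m N \<mu> t (count_ge t xs) \<le> pot_sum m N \<mu> xs"
      unfolding pot_sum_def using t by (intro member_le_sum level_pot_nonneg adm) auto
    moreover have "count_ge t xs < N" using count_ge_antimono[of t xs] t notfull by auto
    ultimately show "level_drift m N \<mu> xs t \<le> - (real N * \<mu> * real (count_ge t xs) * level_const m \<mu> (t+1))"
      using level_pot_drift_low[OF adm, of t m "count_ge t xs"] t below
      unfolding level_drift_def by auto
  qed
  also have "\<dots> = - real N * \<mu> * mut_cost m \<mu> xs"
    unfolding mut_cost_def by (simp add: sum_negf sum_distrib_left mult.assoc)
  finally have low: "(\<Sum>t\<in>{1..<m-1}. level_drift m N \<mu> xs t) \<le> - real N * \<mu> * mut_cost m \<mu> xs" .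
  have "yp \<le> N" unfolding yp_def using count_ge_le[of "m-1" xs] len by simp
  then have top: "level_drift m N \<mu> xs (m-1)
      \<le> - real N * \<mu> * real yp * (1 - real yp / real N - level_pot m N \<mu> (m-1) yp)"
    using level_pot_drift_top[OF adm, of yp m] unfolding level_drift_def yp_def by simp
  show ?thesis unfolding split using low top by (subst sum.union_disjoint) auto
qed

lemma card_top:
  assumes "2 \<le> m" "\<forall>x\<in>set xs. x < m"
  shows "card ({i. i < length xs \<and> 1 \<le> xs ! i} \<inter> {i. xs!i = m - 1}) = count_ge (m-1) xs"
proof -
  have lt: "\<And>i. i < length xs \<Longrightarrow> xs!i < m" using assms(2) by (auto simp: nth_mem)
  show ?thesis unfolding count_ge_def using assms(1) lt
    by (intro arg_cong[where f=card]) (auto, fastforce+)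
qed

text \<open>Summing the increments over all nonzero individuals below the top level gives at most
  the mutation cost: an individual of type s contributes to each count_ge t with t \<le> s.\<close>
lemma level_const_sum_bound:
  assumes "2 \<le> m" "\<forall>x\<in>set xs. x < m" "0 < \<mu>" "\<mu> \<le> 1"
  shows "(\<Sum>i\<in>{i. i < length xs \<and> 1 \<le> xs ! i} \<inter> - {i. xs!i = m - 1}. level_const m \<mu> (Suc (xs!i)))
    \<le> (\<Sum>t\<in>{1..<m-1}. real (count_ge t xs) * level_const m \<mu> (t+1))"
proof -
  let ?A = "{i. i < length xs \<and> 1 \<le> xs ! i} \<inter> - {i. xs!i = m - 1}"
  let ?g = "\<lambda>i t. if t \<le> xs!i then level_const m \<mu> (t+1) else 0"
  have "(\<Sum>i\<in>?A. level_const m \<mu> (Suc (xs!i))) \<le> (\<Sum>i\<in>?A. \<Sum>t\<in>{1..<m-1}. ?g i t)"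
  proof (intro sum_mono)
    fix i assume i: "i \<in> ?A"
    then have "xs ! i < m" using assms(2) by (auto simp: nth_mem)
    then have mem: "xs ! i \<in> {1..<m-1}" using i by auto
    have "level_const m \<mu> (Suc (xs!i)) = ?g i (xs!i)" by simp
    also have "\<dots> \<le> (\<Sum>t\<in>{1..<m-1}. ?g i t)"
      by (rule member_le_sum[OF mem]) (auto intro: less_imp_le level_const_pos assms)
    finally show "level_const m \<mu> (Suc (xs!i)) \<le> (\<Sum>t\<in>{1..<m-1}. ?g i t)" .
  qed
  also have "\<dots> \<le> (\<Sum>i\<in>{..<length xs}. \<Sum>t\<in>{1..<m-1}. ?g i t)"
  proof (rule sum_mono2)
    show "finite {..<length xs}" by simp
    show "?A \<subseteq> {..<length xs}" by auto
    fix i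
    have "\<And>t. 0 \<le> ?g i t" using level_const_pos[OF assms(3,4)] by (simp add: less_imp_le)
    then show "0 \<le> (\<Sum>t\<in>{1..<m-1}. ?g i t)" by (intro sum_nonneg) 
  qed
  also have "\<dots> = (\<Sum>t\<in>{1..<m-1}. \<Sum>i\<in>{..<length xs}. ?g i t)" by (rule sum.swap)
  also have "\<dots> = (\<Sum>t\<in>{1..<m-1}. real (count_ge t xs) * level_const m \<mu> (t+1))"
  proof (intro sum.cong refl)
    fix t
    have "(\<Sum>i\<in>{..<length xs}. ?g i t) = (\<Sum>i\<in>{i\<in>{..<length xs}. t \<le> xs!i}. level_const m \<mu> (t+1))"
      by (rule sum.inter_filter[symmetric]) simp
    also have "{i\<in>{..<length xs}. t \<le> xs!i} = {i. i < length xs \<and> t \<le> xs ! i}" by auto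
    also have "(\<Sum>i\<in>{i. i < length xs \<and> t \<le> xs ! i}. level_const m \<mu> (t+1)) = real (count_ge t xs) * level_const m \<mu> (t+1)"
      unfolding count_ge_def by simp
    finally show "(\<Sum>i\<in>{..<length xs}. ?g i t) = real (count_ge t xs) * level_const m \<mu> (t+1)" .
  qed
  finally show ?thesis .
qed

lemma set_update_lt:
  assumes "\<forall>x\<in>set xs. x < m" "v < m"
  shows "\<forall>x\<in>set (xs[i:=v]). x < m"
  using assms set_update_subset_insert[of xs i v] by auto

lemma pot_sum_mut:
  assumes "admissible N \<mu>" "i < length xs" "Suc (xs!i) < m"
  shows "pot_sum m N \<mu> (xs[i:=Suc (xs!i)]) \<le> pot_sum m N \<mu> xs + level_const m \<mu> (Suc (xs!i))"
proof -
  have "pot_sum m N \<mu> (xs[i:=Suc (xs!i)]) = (\<Sum>t\<in>{1..<m}. level_pot m N \<mu> t (count_ge t xs + (if t = Suc (xs!i) then 1 else 0)))"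
    unfolding pot_sum_def using assms by (simp add: count_ge_mutate)
  also have "\<dots> \<le> (\<Sum>t\<in>{1..<m}. level_pot m N \<mu> t (count_ge t xs) + (if t = Suc (xs!i) then level_const m \<mu> t else 0))"
    using level_pot_inc[OF assms(1)] by (intro sum_mono) auto
  also have "\<dots> = pot_sum m N \<mu> xs + level_const m \<mu> (Suc (xs!i))"
    unfolding pot_sum_def sum.distrib using assms by simp
  finally show ?thesis .
qed


text \<open>A single mutation: to type m it is bounded by the extinction estimate (the count of
  nonzero types is unchanged), otherwise the potential sum rises by the next increment.\<close>
lemma mutation_successor_bound:
  fixes F :: "nat list \<Rightarrow> real"
  assumes adm: "admissible N \<mu>" and len: "length xs = N" and lt: "\<forall>x\<in>set xs. x < m"
    and Fext: "\<And>ys. length ys = N \<Longrightarrow> F ys \<le> 1 - real (count_ge 1 ys) / real N"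
    and Fpot: "\<And>ys. length ys = N \<Longrightarrow> \<forall>x\<in>set ys. x < m \<Longrightarrow> F ys \<le> pot_sum m N \<mu> ys"
    and i: "i < length xs" "1 \<le> xs ! i"
  shows "F (xs[i := Suc (xs ! i)]) \<le> (if xs ! i = m - 1 then 1 - real (count_ge 1 xs) / real N
           else pot_sum m N \<mu> xs + level_const m \<mu> (Suc (xs ! i)))"
proof -
  have nlen: "length (xs[i := Suc (xs ! i)]) = N" using len by simp
  show ?thesis
  proof (cases "xs ! i = m - 1")
    case True
    have "count_ge 1 (xs[i := Suc (xs ! i)]) = count_ge 1 xs"
      using i count_ge_mutate[of i xs 1] by auto
    then show ?thesis using Fext[OF nlen] True by simp
  next
    case False
    have "xs ! i < m" using lt i by (auto simp: nth_mem)
    then have sl: "Suc (xs ! i) < m" using False by simp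
    have "F (xs[i := Suc (xs ! i)]) \<le> pot_sum m N \<mu> (xs[i := Suc (xs ! i)])"
      using Fpot[OF nlen set_update_lt[OF lt sl]] .
    also have "\<dots> \<le> pot_sum m N \<mu> xs + level_const m \<mu> (Suc (xs ! i))"
      by (rule pot_sum_mut[OF adm i(1) sl])
    finally show ?thesis using False by simp
  qed
qed

lemma mutation_bound:
  fixes F :: "nat list \<Rightarrow> real"
  assumes adm: "admissible N \<mu>" and m: "2 \<le> m" and len: "length xs = N"
    and lt: "\<forall>x\<in>set xs. x < m"
    and Fext: "\<And>ys. length ys = N \<Longrightarrow> F ys \<le> 1 - real (count_ge 1 ys) / real N"
    and Fpot: "\<And>ys. length ys = N \<Longrightarrow> \<forall>x\<in>set ys. x < m \<Longrightarrow> F ys \<le> pot_sum m N \<mu> ys"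
  defines "k \<equiv> count_ge 1 xs" and "yp \<equiv> count_ge (m-1) xs"
  shows "(\<Sum>i\<in>{i. i < length xs \<and> 1 \<le> xs ! i}. F (xs[i := Suc (xs ! i)]))
    \<le> real yp * (1 - real k / real N) + (real k - real yp) * pot_sum m N \<mu> xs + mut_cost m \<mu> xs"
proof -
  define nz where "nz = {i. i < length xs \<and> 1 \<le> xs ! i}"
  define P where "P = {i. xs!i = m - 1}"
  define S where "S = pot_sum m N \<mu> xs"
  have mu: "0 < \<mu>" "\<mu> \<le> 1" using adm by (auto simp: admissible_def)
  have finnz: "finite nz" unfolding nz_def by simp
  have top: "card (nz \<inter> P) = yp" using card_top[OF m lt] unfolding nz_def P_def yp_def .
  have "(\<Sum>i\<in>nz. F (xs[i := Suc (xs ! i)]))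
      \<le> (\<Sum>i\<in>nz. if i \<in> P then 1 - real k / real N else S + level_const m \<mu> (Suc (xs!i)))"
    using mutation_successor_bound[OF adm len lt Fext Fpot]
    unfolding nz_def P_def S_def k_def by (intro sum_mono) auto
  also have "\<dots> = (\<Sum>i\<in>nz \<inter> P. 1 - real k / real N) + (\<Sum>i\<in>nz \<inter> - P. S + level_const m \<mu> (Suc (xs!i)))"
    by (rule sum.If_cases[OF finnz, of "\<lambda>i. i \<in> P", simplified])
  also have "\<dots> = real yp * (1 - real k / real N)
      + (real (card (nz \<inter> - P)) * S + (\<Sum>i\<in>nz \<inter> - P. level_const m \<mu> (Suc (xs!i))))"
    using top by (simp add: sum.distrib)
  also have "card (nz \<inter> - P) = k - yp"
  proof -
    have "card (nz \<inter> P) + card (nz \<inter> - P) = card nz"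
      using finnz by (subst card_Un_disjoint[symmetric]) (auto intro: arg_cong[where f=card])
    moreover have "card nz = k" unfolding nz_def k_def count_ge_def ..
    ultimately show ?thesis using top by simp
  qed
  also have "(\<Sum>i\<in>nz \<inter> - P. level_const m \<mu> (Suc (xs!i))) \<le> mut_cost m \<mu> xs"
    using level_const_sum_bound[OF m lt mu] unfolding nz_def P_def mut_cost_def .
  finally show ?thesis
    using count_ge_antimono[of "m-1" xs] m unfolding nz_def S_def k_def yp_def by (simp add: of_nat_diff)
qed

text \<open>The algebra combining the two parts of one step: with p = N/(N + mu k), resampling
  bound N^2 S + T and mutation bound M (where y, A are the count and potential of the top
  level and C the mutation cost), the averaged bound does not exceed the potential sum S.\<close>
lemma drift_algebra:
  fixes N \<mu> k S T M C y A :: real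
  assumes "N > 0" "\<mu> > 0" "k > 0" "M \<le> y * (1 - k / N) + (k - y) * S + C"
    "T \<le> - N * \<mu> * C - N * \<mu> * y * (1 - y / N - A)" "y \<le> k" "A \<le> S" "0 \<le> y"
  shows "N / (N + \<mu> * k) * ((N^2 * S + T) / N^2) + (1 - N / (N + \<mu> * k)) * (M / k) \<le> S"
proof -
  have pos: "N + \<mu> * k > 0" using assms by (simp add: add_pos_pos)
  have eq: "N / (N + \<mu> * k) * ((N^2 * S + T) / N^2) + (1 - N / (N + \<mu> * k)) * (M / k)
      = (N * S + T / N + \<mu> * M) / (N + \<mu> * k)"
  proof -
    have "1 - N / (N + \<mu> * k) = \<mu> * k / (N + \<mu> * k)" using pos by (simp add: field_simps)
    moreover have "N / (N + \<mu> * k) * ((N^2 * S + T) / N^2) = (N * S + T / N) / (N + \<mu> * k)"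
    proof -
      have "(N^2 * S + T) / N^2 = (N * S + T / N) / N" using assms(1) by (simp add: field_simps power2_eq_square)
      then show ?thesis using assms(1) by simp
    qed
    moreover have "\<mu> * k / (N + \<mu> * k) * (M / k) = \<mu> * M / (N + \<mu> * k)"
      using assms(3) pos by (simp add: field_simps)
    ultimately show ?thesis by (simp add: add_divide_distrib)
  qed
  have T': "T / N \<le> - \<mu> * C - \<mu> * y * (1 - y / N - A)"
  proof -
    have "- N * \<mu> * C - N * \<mu> * y * (1 - y / N - A) = N * (- \<mu> * C - \<mu> * y * (1 - y / N - A))"
      by (simp add: algebra_simps)
    then have "T \<le> N * (- \<mu> * C - \<mu> * y * (1 - y / N - A))" using assms(5) by simp
    then show ?thesis using assms(1) by (simp add: pos_divide_le_eq mult.commute)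
  qed
  have M': "\<mu> * M \<le> \<mu> * (y * (1 - k / N) + (k - y) * S + C)"
    using assms(4) assms(2) by (simp add: mult_left_mono)
  have key: "\<mu> * y * ((1 - k / N) - S - (1 - y / N - A)) \<le> 0"
  proof -
    have e: "(1 - k / N) - S - (1 - y / N - A) = (y - k) / N + (A - S)"
      by (simp add: diff_divide_distrib)
    have "(y - k) / N \<le> 0" using assms(1,6) by (simp add: divide_nonpos_pos)
    then have "(1 - k / N) - S - (1 - y / N - A) \<le> 0"
      unfolding e using assms(7) by linarith
    then show ?thesis using assms(2,8) by (simp add: mult_nonneg_nonpos)
  qed
  have "N * S + T / N + \<mu> * M \<le> S * (N + \<mu> * k)"
    using T' M' key by (simp add: algebra_simps)
  then show ?thesis unfolding eq using pos by (simp add: divide_le_eq)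
qed


lemma step_bound_interior:
  fixes F :: "nat list \<Rightarrow> real"
  assumes adm: "admissible N \<mu>" and m: "2 \<le> m" and len: "length xs = N" and lt: "\<forall>x\<in>set xs. x < m"
    and Fb: "\<And>ys. \<bar>F ys\<bar> \<le> 1"
    and Fext: "\<And>ys. length ys = N \<Longrightarrow> F ys \<le> 1 - real (count_ge 1 ys) / real N"
    and Fpot: "\<And>ys. length ys = N \<Longrightarrow> \<forall>x\<in>set ys. x < m \<Longrightarrow> F ys \<le> pot_sum m N \<mu> ys"
    and notfull: "count_ge 1 xs < N" and below: "pot_sum m N \<mu> xs < 1"
  shows "integral\<^sup>L (sf_step N \<mu> xs) F \<le> pot_sum m N \<mu> xs"
proof -
  have N1: "1 \<le> N" and Npos: "real N > 0" and mu: "0 < \<mu>" using adm by (auto simp: admissible_def)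
  define k where "k = count_ge 1 xs"
  define yp where "yp = count_ge (m-1) xs"
  define S where "S = pot_sum m N \<mu> xs"
  define D where "D = (\<Sum>i<N. \<Sum>j<N. F (xs[i := xs ! j]))"
  define M where "M = (\<Sum>i\<in>{i. i < length xs \<and> 1 \<le> xs ! i}. F (xs[i := Suc (xs ! i)]))"
  define T where "T = (\<Sum>t\<in>{1..<m}. level_drift m N \<mu> xs t)"
  define p where "p = real N / (real N + \<mu> * real k)"
  have I: "integral\<^sup>L (sf_step N \<mu> xs) F
      = (if k = 0 then D / (real N)^2 else p * (D / (real N)^2) + (1 - p) * (M / real k))"
    unfolding D_def M_def p_def k_def using integral_step[OF N1 Fb mu] by simp
  have "D \<le> (\<Sum>i<N. \<Sum>j<N. pot_sum m N \<mu> (xs[i := xs ! j]))"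
    unfolding D_def using len lt by (intro sum_mono Fpot set_update_lt) (auto simp: nth_mem)
  then have Dle: "D \<le> (real N)^2 * S + T" unfolding resample_pot_sum[OF len] S_def T_def .
  have Tle: "T \<le> - real N * \<mu> * mut_cost m \<mu> xs - real N * \<mu> * real yp * (1 - real yp / real N - level_pot m N \<mu> (m-1) yp)"
    unfolding T_def yp_def by (rule level_drift_bound[OF adm m len notfull below])
  have cost: "0 \<le> mut_cost m \<mu> xs"
    unfolding mut_cost_def using level_const_pos[of \<mu>] adm by (intro sum_nonneg) (auto simp: admissible_def less_imp_le)
  have ypk: "yp \<le> k" unfolding yp_def k_def using count_ge_antimono m by simp
  have top_le: "level_pot m N \<mu> (m-1) yp \<le> S"
    unfolding S_def pot_sum_def yp_def using m by (intro member_le_sum level_pot_nonneg adm) auto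
  show ?thesis
  proof (cases "k = 0")
    case True
    moreover have "0 \<le> real N * \<mu> * mut_cost m \<mu> xs" using cost mu by simp
    ultimately have "T \<le> 0" using Tle ypk by simp
    then have "D / (real N)^2 \<le> S" using Dle Npos by (simp add: divide_le_eq mult.commute)
    then show ?thesis unfolding I S_def[symmetric] using True by simp
  next
    case False
    have Mle: "M \<le> real yp * (1 - real k / real N) + (real k - real yp) * S + mut_cost m \<mu> xs"
      unfolding M_def S_def k_def yp_def by (rule mutation_bound[OF adm m len lt Fext Fpot])
    have "p * ((real N ^ 2 * S + T) / (real N)^2) + (1 - p) * (M / real k) \<le> S"
      unfolding p_def by (rule drift_algebra[OF Npos mu _ Mle Tle _ top_le]) (use False ypk in auto)
    moreover have "p * (D / (real N)^2) \<le> p * ((real N ^ 2 * S + T) / (real N)^2)"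
      using Dle Npos mu unfolding p_def by (intro mult_left_mono divide_right_mono) auto
    ultimately show ?thesis unfolding I S_def[symmetric] using False by simp
  qed
qed

text \<open>The one-step inequality for the Lyapunov function.  If every individual has nonzero
  type the extinction estimate alone gives 0; if the potential sum is at least 1 the bound 1
  is trivial.\<close>
lemma step_bound:
  fixes F :: "nat list \<Rightarrow> real"
  assumes adm: "admissible N \<mu>" and m: "2 \<le> m" and len: "length xs = N" and lt: "\<forall>x\<in>set xs. x < m"
    and Fb: "\<And>ys. \<bar>F ys\<bar> \<le> 1"
    and Fext: "\<And>ys. length ys = N \<Longrightarrow> F ys \<le> 1 - real (count_ge 1 ys) / real N"
    and FV: "\<And>ys. length ys = N \<Longrightarrow> \<forall>x\<in>set ys. x < m \<Longrightarrow> F ys \<le> lyap m N \<mu> ys"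
  shows "integral\<^sup>L (sf_step N \<mu> xs) F \<le> lyap m N \<mu> xs"
proof -
  have N1: "1 \<le> N" and mu: "0 < \<mu>" using adm by (auto simp: admissible_def)
  have Fpot: "F ys \<le> pot_sum m N \<mu> ys" if "length ys = N" "\<forall>x\<in>set ys. x < m" for ys
    using FV[OF that] lyap_le_pot_sum[OF adm] by (rule order_trans)
  consider (full) "count_ge 1 xs = N" | (large) "count_ge 1 xs < N" "1 \<le> pot_sum m N \<mu> xs"
    | (interior) "count_ge 1 xs < N" "pot_sum m N \<mu> xs < 1"
    using count_ge_le[of 1 xs] len by fastforce
  then show ?thesis
  proof cases
    case full
    have FG: "F ys \<le> extinct_est N ys" if "length ys = N" for ys
      using Fext[OF that] unfolding extinct_est_def by (simp add: le_max_iff_disj)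
    have "integral\<^sup>L (sf_step N \<mu> xs) F \<le> integral\<^sup>L (sf_step N \<mu> xs) (extinct_est N)"
      by (rule integral_step_mono[OF N1 mu len Fb extinct_est_bounded FG])
    also have "\<dots> \<le> extinct_est N xs" by (rule extinct_est_step[OF N1 mu len])
    finally show ?thesis using full N1 len by (simp add: extinct_est_eq lyap_def)
  next
    case large
    then show ?thesis using integral_le_1[OF Fb] by (simp add: lyap_def)
  next
    case interior
    then show ?thesis using step_bound_interior[OF adm m len lt Fb Fext Fpot] by (simp add: lyap_def)
  qed
qed

text \<open>Before
  type m appears the event is decided by the future path; after one step, successors
  containing type m are handled by the extinction bound.\<close>
lemma main_bound:
  assumes adm: "admissible N \<mu>" and m: "2 \<le> m"
  shows "length xs = N \<Longrightarrow> \<forall>x\<in>set xs. x < m \<Longrightarrow> measure (sf_path N \<mu> n xs) (sf_event m) \<le> lyap m N \<mu> xs"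
proof (induction n arbitrary: xs)
  case 0
  have "[xs] \<notin> sf_event m" using 0 unfolding sf_event_def by auto
  then show ?case using lyap_nonneg[OF adm] by simp
next
  case (Suc n)
  have N1: "1 \<le> N" and mu: "0 < \<mu>" using adm by (auto simp: admissible_def)
  have pre: "Cons xs -` sf_event m = sf_event m"
  proof -
    have "m \<notin> set xs" using Suc.prems by auto
    then show ?thesis unfolding sf_event_def by (auto split: list.splits)
  qed
  have "measure (sf_path N \<mu> (Suc n) xs) (sf_event m)
      = integral\<^sup>L (sf_step N \<mu> xs) (\<lambda>zs. measure (sf_path N \<mu> n zs) (sf_event m))"
    unfolding path_Suc_measure pre ..
  also have "\<dots> \<le> lyap m N \<mu> xs"
  proof (rule step_bound[OF adm m Suc.prems])
    show "\<And>ys. \<bar>measure (sf_path N \<mu> n ys) (sf_event m)\<bar> \<le> 1" by simp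
    fix ys :: "nat list" assume ys: "length ys = N"
    have "measure (sf_path N \<mu> n ys) (sf_event m) \<le> measure (sf_path N \<mu> n ys) extinct"
      using event_sub_extinct by (intro measure_pmf.finite_measure_mono) auto
    also have "\<dots> \<le> extinct_est N ys" by (rule extinct_prob_bound[OF N1 mu ys])
    also have "\<dots> = 1 - real (count_ge 1 ys) / real N" by (rule extinct_est_eq[OF N1 ys])
    finally show "measure (sf_path N \<mu> n ys) (sf_event m) \<le> 1 - real (count_ge 1 ys) / real N" .
  next
    fix ys :: "nat list" assume "length ys = N" "\<forall>x\<in>set ys. x < m"
    then show "measure (sf_path N \<mu> n ys) (sf_event m) \<le> lyap m N \<mu> ys" by (rule Suc.IH)
  qed
  finally show ?case .
qed

lemma init_props:
  assumes "1 \<le> N"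
  shows "length (sf_init N) = N" "count_ge 1 (sf_init N) = 1" "\<And>t. 2 \<le> t \<Longrightarrow> count_ge t (sf_init N) = 0"
proof -
  show L: "length (sf_init N) = N" using assms by (simp add: sf_init_def)
  have nth: "sf_init N ! i = (if i = 0 then 1 else 0)" if "i < N" for i
    using that by (cases i) (auto simp: sf_init_def)
  have "{i. i < length (sf_init N) \<and> 1 \<le> sf_init N ! i} = {0}"
    using assms by (auto simp: L nth split: if_splits)
  then show "count_ge 1 (sf_init N) = 1" unfolding count_ge_def by simp
  fix t :: nat assume t: "2 \<le> t"
  have "{i. i < length (sf_init N) \<and> t \<le> sf_init N ! i} = {}"
    using assms t by (auto simp: L nth)
  then show "count_ge t (sf_init N) = 0" unfolding count_ge_def by simp
qed

text \<open>Started from one type-1 individual, lyap is at most A_1(1) \<le> c_(m-2), which gives the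
  quantitative bound q'_m \<le> 16 mu^(1 - 2^-(m-1)) in the admissible regime.\<close>
lemma q_prime_bound:
  assumes adm: "admissible N \<mu>" and m: "2 \<le> m"
  shows "0 \<le> q_prime m N \<mu>" "q_prime m N \<mu> \<le> 16 * \<mu> powr (1 - 1 / 2 ^ (m - 1))"
proof -
  have N1: "1 \<le> N" and mu: "0 < \<mu>" "\<mu> \<le> 1" using adm by (auto simp: admissible_def)
  note ip = init_props[OF N1]
  have lt: "\<forall>x\<in>set (sf_init N). x < m" using m by (auto simp: sf_init_def)
  have Pb: "measure (sf_path N \<mu> n (sf_init N)) (sf_event m) \<le> lyap m N \<mu> (sf_init N)" for n
    using main_bound[OF adm m ip(1) lt] .
  have "lyap m N \<mu> (sf_init N) \<le> pot_sum m N \<mu> (sf_init N)" by (rule lyap_le_pot_sum[OF adm])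
  also have "pot_sum m N \<mu> (sf_init N) = (\<Sum>t\<in>{1..<m}. if t = 1 then level_pot m N \<mu> 1 1 else 0)"
    unfolding pot_sum_def by (intro sum.cong refl) (use ip(2) ip(3) in auto)
  also have "\<dots> = level_pot m N \<mu> 1 1" using m by simp
  also have "\<dots> \<le> level_pot m N \<mu> 1 0 + level_const m \<mu> 1" using level_pot_inc[OF adm, of 1 m 0] m by simp
  also have "\<dots> = rate_const \<mu> (m - 2)" unfolding level_const_def by (simp add: numeral_2_eq_2)
  also have "\<dots> \<le> 16 * \<mu> powr (1 - 1 / 2 ^ (m - 1))"
    using rate_const_bound[OF mu, of "m-2"] m by (simp add: Suc_diff_Suc numeral_2_eq_2)
  finally have V: "lyap m N \<mu> (sf_init N) \<le> 16 * \<mu> powr (1 - 1 / 2 ^ (m - 1))" .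
  have bdd: "bdd_above (range (\<lambda>n. measure (sf_path N \<mu> n (sf_init N)) (sf_event m)))"
    using Pb by (intro bdd_aboveI2)
  show "q_prime m N \<mu> \<le> 16 * \<mu> powr (1 - 1 / 2 ^ (m - 1))"
    unfolding q_prime_def using Pb V by (intro cSUP_least) (auto intro: order_trans)
  have "measure (sf_path N \<mu> 0 (sf_init N)) (sf_event m) \<le> q_prime m N \<mu>"
    unfolding q_prime_def by (rule cSUP_upper[OF _ bdd]) simp
  then show "0 \<le> q_prime m N \<mu>" by (meson measure_nonneg order_trans)
qed

lemma eventually_admissible:
  fixes \<mu> :: "nat \<Rightarrow> real" and e :: real
  assumes e: "0 < e" and pos: "\<And>N. \<mu> N > 0" and lim: "(\<lambda>N. real N * \<mu> N powr e) \<longlonglongrightarrow> 0"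
  shows "eventually (\<lambda>N. admissible N (\<mu> N)) sequentially"
proof -
  have "eventually (\<lambda>N. real N * \<mu> N powr e < (1/64) powr e) sequentially"
    using order_tendstoD(2)[OF lim] by simp
  with eventually_ge_at_top[of 2] show ?thesis
  proof eventually_elim
    case (elim N)
    have "\<mu> N \<le> 1/64"
    proof (rule ccontr)
      assume "\<not> \<mu> N \<le> 1/64"
      then have "(1/64) powr e < \<mu> N powr e" using e by (intro powr_less_mono2) auto
      also have "\<mu> N powr e \<le> real N * \<mu> N powr e"
        using elim(1) by (intro mult_le_cancel_right1[THEN iffD2]) auto
      finally show False using elim(2) by simp
    qed
    then show ?case using elim(1) pos by (simp add: admissible_def)
  qed
qed

theorem mainTheorem5:
  fixes m :: nat and \<mu> :: "nat \<Rightarrow> real"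
  assumes "m \<ge> 2"
    and "\<And>N. \<mu> N > 0"
    and "(\<lambda>N. real N * \<mu> N powr (1 - 1 / 2 ^ (m - 1))) \<longlonglongrightarrow> 0"
  shows "(\<lambda>N. real N * q_prime m N (\<mu> N)) \<longlonglongrightarrow> 0"
proof -
  let ?e = "1 - 1 / 2 ^ (m - 1) :: real"
  have "(2::real) ^ 1 \<le> 2 ^ (m - 1)" using assms(1) by (intro power_increasing) auto
  then have "0 < ?e" by (simp add: field_simps)
  then have adm: "eventually (\<lambda>N. admissible N (\<mu> N)) sequentially"
    using eventually_admissible assms(2,3) by blast
  have lower: "eventually (\<lambda>N. 0 \<le> real N * q_prime m N (\<mu> N)) sequentially"
    using adm by eventually_elim (simp add: q_prime_bound(1)[OF _ assms(1)])
  have upper: "eventually (\<lambda>N. real N * q_prime m N (\<mu> N) \<le> 16 * (real N * \<mu> N powr ?e)) sequentially"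
  proof (rule eventually_mono[OF adm])
    fix N assume "admissible N (\<mu> N)"
    then have "real N * q_prime m N (\<mu> N) \<le> real N * (16 * \<mu> N powr ?e)"
      using q_prime_bound(2)[OF _ assms(1)] by (intro mult_left_mono) auto
    then show "real N * q_prime m N (\<mu> N) \<le> 16 * (real N * \<mu> N powr ?e)" by simp
  qed
  have "(\<lambda>N. 16 * (real N * \<mu> N powr ?e)) \<longlonglongrightarrow> 16 * 0"
    by (intro tendsto_mult tendsto_const assms(3))
  then show ?thesis using tendsto_sandwich[OF lower upper tendsto_const] by simp
qed

end
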